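(* Let $G\in\mathcal{G}(\widehat{C}_6,\widehat{C}_7)$, let $x\in V(G)$, let $A$ be a connected component of $G[N_2(x)]$ not belonging to $A^*$, and let $a\in V(A)$ with $|N(a)\cap D|=2$. Then every independent set $S\subseteq N_2(x)\setminus V(A^* )$ with $D\subseteq N(S)$ contains $a$.
   Context: All graphs are finite, simple and undirected. $\mathcal{G}(\widehat{C}_6,\widehat{C}_7)$ is the family of graphs with no subgraph (not necessarily induced) isomorphic to $C_6$ or $C_7$. For a vertex set $S$, $N_i(S)$ is the set of vertices at distance exactly $i$ from $S$, $N(S)=N_1(S)$, $N(v)=N(\{v\})$, $N_2(v)=N_2(\{v\})$ (all in $G$). $A^*$ is the set of connected components $A$ of $G[N_2(x)]$ for which there exists a vertex $a\in V(A)$ with $N(x)\cap N(a)=N(x)\cap N(V(A))$; $V(A^* )$ is the union of their vertex sets; and $D=N(x)\setminus N(V(A^* ))$. *)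

theory Defs
  imports Main
begin

definition simple_graph :: "'a set \<Rightarrow> ('a \<Rightarrow> 'a \<Rightarrow> bool) \<Rightarrow> bool" where
  "simple_graph V E \<longleftrightarrow> finite V \<and> (\<forall>u v. E u v \<longrightarrow> u \<in> V \<and> v \<in> V)
     \<and> (\<forall>u v. E u v \<longrightarrow> E v u) \<and> (\<forall>v. \<not> E v v)"

definition has_cycle_subgraph :: "'a set \<Rightarrow> ('a \<Rightarrow> 'a \<Rightarrow> bool) \<Rightarrow> nat \<Rightarrow> bool" where
  "has_cycle_subgraph V E k \<longleftrightarrow> (\<exists>f :: nat \<Rightarrow> 'a. inj_on f {..<k} \<and> (\<forall>i<k. f i \<in> V)
     \<and> (\<forall>i<k. E (f i) (f (Suc i mod k))))"

definition nbhd :: "'a set \<Rightarrow> ('a \<Rightarrow> 'a \<Rightarrow> bool) \<Rightarrow> 'a set \<Rightarrow> 'a set" where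
  "nbhd V E S = {v \<in> V. v \<notin> S \<and> (\<exists>s\<in>S. E s v)}"

definition nbhd2 :: "'a set \<Rightarrow> ('a \<Rightarrow> 'a \<Rightarrow> bool) \<Rightarrow> 'a set \<Rightarrow> 'a set" where
  "nbhd2 V E S = {v \<in> V. v \<notin> S \<and> v \<notin> nbhd V E S \<and> (\<exists>u\<in>nbhd V E S. E u v)}"

definition components :: "('a \<Rightarrow> 'a \<Rightarrow> bool) \<Rightarrow> 'a set \<Rightarrow> 'a set set" where
  "components E W = {C. \<exists>u\<in>W. C = {v. (\<lambda>a b. a \<in> W \<and> b \<in> W \<and> E a b)\<^sup>*\<^sup>* u v}}"

definition independent :: "('a \<Rightarrow> 'a \<Rightarrow> bool) \<Rightarrow> 'a set \<Rightarrow> bool" where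
  "independent E S \<longleftrightarrow> (\<forall>u\<in>S. \<forall>v\<in>S. \<not> E u v)"

definition Astar :: "'a set \<Rightarrow> ('a \<Rightarrow> 'a \<Rightarrow> bool) \<Rightarrow> 'a \<Rightarrow> 'a set set" where
  "Astar V E x = {A \<in> components E (nbhd2 V E {x}).
     \<exists>a\<in>A. nbhd V E {x} \<inter> nbhd V E {a} = nbhd V E {x} \<inter> nbhd V E A}"

definition Dset :: "'a set \<Rightarrow> ('a \<Rightarrow> 'a \<Rightarrow> bool) \<Rightarrow> 'a \<Rightarrow> 'a set" where
  "Dset V E x = nbhd V E {x} - nbhd V E (\<Union> (Astar V E x))"

end

theory Submission
  imports Defs
begin

text \<open>Let \<open>d\<^sub>1, d\<^sub>2\<close> be the two neighbours of \<open>a\<close> in \<open>D\<close> and suppose \<open>a \<notin> S\<close>.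
  Excluding hexagons and heptagons through \<open>x\<close>, one shows: every vertex of \<open>A\<close> other than \<open>a\<close> is
  adjacent to \<open>a\<close>; hence a vertex \<open>s \<noteq> a\<close> of \<open>N\<^sub>2(x)\<close> adjacent to \<open>d\<^sub>1\<close> is not in \<open>A\<close> (as
  \<open>A \<notin> A\<^sup>*\<close>, some vertex of \<open>A\<close> sees a neighbour of \<open>x\<close> that \<open>a\<close> misses); and then every vertex
  of the component \<open>B\<close> of \<open>s\<close> sees only \<open>d\<^sub>1\<close> or \<open>d\<^sub>2\<close> in \<open>N(x)\<close>, never both, since
  \<open>B \<notin> A\<^sup>*\<close>. Walking in \<open>B\<close> from \<open>s\<close> to a vertex that sees \<open>d\<^sub>2\<close>, the first such vertex
  \<open>q\<close> is adjacent to \<open>s\<close>: otherwise its two predecessors \<open>p, u\<close> see \<open>d\<^sub>1\<close> and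
  \<open>x d\<^sub>1 p u q d\<^sub>2\<close> is a hexagon. Doing this for neighbours
  \<open>s, s' \<in> S\<close> of \<open>d\<^sub>1\<close> and \<open>d\<^sub>2\<close> gives \<open>q\<close> and \<open>p\<close>, and \<open>d\<^sub>1 s q d\<^sub>2 s' p\<close> is a hexagon.\<close>

abbreviation induced :: "('a \<Rightarrow> 'a \<Rightarrow> bool) \<Rightarrow> 'a set \<Rightarrow> 'a \<Rightarrow> 'a \<Rightarrow> bool" where
  "induced E W a b \<equiv> a \<in> W \<and> b \<in> W \<and> E a b"

lemma induced_rtranclp_mem: "(induced E W)\<^sup>*\<^sup>* u v \<Longrightarrow> u \<in> W \<Longrightarrow> v \<in> W"
  by (induction rule: rtranclp_induct) auto

lemma components_subset: "C \<in> components E W \<Longrightarrow> C \<subseteq> W"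
  unfolding components_def by (auto intro: induced_rtranclp_mem)

lemma component_of_mem: "s \<in> W \<Longrightarrow> {v. (induced E W)\<^sup>*\<^sup>* s v} \<in> components E W"
  unfolding components_def by blast

lemma symp_induced: "symp E \<Longrightarrow> symp (induced E W)"
  by (auto intro!: sympI dest: sympD)

lemma component_eq:
  assumes "symp E" "C \<in> components E W" "s \<in> C"
  shows "C = {v. (induced E W)\<^sup>*\<^sup>* s v}"
proof -
  from assms(2) obtain u where C: "C = {v. (induced E W)\<^sup>*\<^sup>* u v}"
    unfolding components_def by blast
  with assms(3) have us: "(induced E W)\<^sup>*\<^sup>* u s" by blast
  have "(induced E W)\<^sup>*\<^sup>* s u"
    using us symp_rtranclp[OF symp_induced[OF assms(1)]] by (blast dest: sympD)
  with us show ?thesis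
    unfolding C by (auto intro: rtranclp_trans)
qed

lemma has_cycle_subgraphI:
  assumes "distinct vs" "set vs \<subseteq> V" "list_all2 E vs (tl vs @ [hd vs])"
  shows "has_cycle_subgraph V E (length vs)"
  unfolding has_cycle_subgraph_def
proof (intro exI[of _ "(!) vs"] conjI allI impI)
  fix i assume i: "i < length vs"
  have "E (vs ! i) ((tl vs @ [hd vs]) ! i)"
    using assms(3) i by (simp add: list_all2_nthD)
  moreover have "(tl vs @ [hd vs]) ! i = vs ! (Suc i mod length vs)"
  proof (cases "Suc i < length vs")
    case True
    then show ?thesis by (simp add: nth_append nth_tl less_diff_conv)
  next
    case False
    with i have "Suc i = length vs" by simp
    then show ?thesis by (cases vs) (simp_all add: nth_append)
  qed
  ultimately show "E (vs ! i) (vs ! (Suc i mod length vs))" by simp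
qed (use assms in \<open>auto simp: inj_on_nth\<close>)

locale C67_free_graph =
  fixes V :: "'a set" and E :: "'a \<Rightarrow> 'a \<Rightarrow> bool"
  assumes simple: "simple_graph V E"
    and no_C6: "\<not> has_cycle_subgraph V E 6" and no_C7: "\<not> has_cycle_subgraph V E 7"
begin

lemma edge_sym: "E u v \<Longrightarrow> E v u"
  using simple unfolding simple_graph_def by blast

lemma edge_commute: "E u v \<longleftrightarrow> E v u"
  using edge_sym by blast

lemma symp_edge: "symp E"
  by (auto intro: sympI edge_sym)

lemma no_loop [simp]: "\<not> E v v"
  using simple unfolding simple_graph_def by blast

lemma adj_ne: "E u v \<Longrightarrow> u \<noteq> v" "E u v \<Longrightarrow> v \<noteq> u"
  by auto

lemma edge_in_V: "E u v \<Longrightarrow> u \<in> V \<and> v \<in> V"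
  using simple unfolding simple_graph_def by blast

lemma no_hexagon:
  assumes "E v0 v1" "E v1 v2" "E v2 v3" "E v3 v4" "E v4 v5" "E v5 v0"
    and "distinct [v0, v1, v2, v3, v4, v5]"
  shows False
proof -
  let ?c = "[v0, v1, v2, v3, v4, v5]"
  have "has_cycle_subgraph V E (length ?c)"
  proof (rule has_cycle_subgraphI)
    show "set ?c \<subseteq> V" using assms(1-5) edge_in_V by auto
  qed (use assms in simp_all)
  with no_C6 show False by (simp add: numeral_eq_Suc)
qed

lemma no_heptagon:
  assumes "E v0 v1" "E v1 v2" "E v2 v3" "E v3 v4" "E v4 v5" "E v5 v6" "E v6 v0"
    and "distinct [v0, v1, v2, v3, v4, v5, v6]"
  shows False
proof -
  let ?c = "[v0, v1, v2, v3, v4, v5, v6]"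
  have "has_cycle_subgraph V E (length ?c)"
  proof (rule has_cycle_subgraphI)
    show "set ?c \<subseteq> V" using assms(1-6) edge_in_V by auto
  qed (use assms in simp_all)
  with no_C7 show False by (simp add: numeral_eq_Suc)
qed

end

locale C67_free_rooted = C67_free_graph V E
  for V :: "'a set" and E :: "'a \<Rightarrow> 'a \<Rightarrow> bool" +
  fixes x :: 'a
begin

abbreviation "N1 \<equiv> nbhd V E {x}"
abbreviation "N2 \<equiv> nbhd2 V E {x}"
abbreviation "linked \<equiv> (induced E N2)\<^sup>*\<^sup>*"

lemma mem_N1_iff: "d \<in> N1 \<longleftrightarrow> E x d"
  unfolding nbhd_def using edge_in_V by fastforce

lemma mem_N2_iff: "v \<in> N2 \<longleftrightarrow> v \<noteq> x \<and> \<not> E x v \<and> (\<exists>d. E x d \<and> E d v)"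
  unfolding nbhd2_def using edge_in_V mem_N1_iff by (auto simp: nbhd_def)

lemma N2_ne_root [simp]: "v \<in> N2 \<Longrightarrow> v \<noteq> x" "v \<in> N2 \<Longrightarrow> x \<noteq> v"
  by (auto simp: mem_N2_iff)

lemma N2_ne_N1: "v \<in> N2 \<Longrightarrow> E x d \<Longrightarrow> v \<noteq> d" "v \<in> N2 \<Longrightarrow> E x d \<Longrightarrow> d \<noteq> v"
  by (auto simp: mem_N2_iff)

lemma N2_not_adj_root [simp]: "v \<in> N2 \<Longrightarrow> \<not> E x v"
  by (simp add: mem_N2_iff)

lemma N2_has_N1_neighbour: "v \<in> N2 \<Longrightarrow> \<exists>d. E x d \<and> E v d"
  unfolding mem_N2_iff using edge_sym by blast

lemma linked_sym: "linked u v \<Longrightarrow> linked v u"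
  using symp_rtranclp[OF symp_induced[OF symp_edge]] by (blast dest: sympD)

lemma N1_inter_nbhd_iff:
  assumes "B \<subseteq> N2"
  shows "d \<in> N1 \<inter> nbhd V E B \<longleftrightarrow> E x d \<and> (\<exists>v\<in>B. E v d)"
proof -
  have "d \<in> nbhd V E B \<longleftrightarrow> (\<exists>v\<in>B. E v d)" if "E x d"
    using that assms edge_in_V unfolding nbhd_def by (auto dest: subsetD)
  then show ?thesis
    using mem_N1_iff by blast
qed

lemma Astar_iff:
  assumes "B \<subseteq> N2"
  shows "B \<in> Astar V E x \<longleftrightarrow> B \<in> components E N2 \<and>
    (\<exists>v\<in>B. \<forall>d. E x d \<longrightarrow> (E v d \<longleftrightarrow> (\<exists>w\<in>B. E w d)))"
proof -
  have "N1 \<inter> nbhd V E {v} = N1 \<inter> nbhd V E B \<longleftrightarrow> (\<forall>d. E x d \<longrightarrow> (E v d \<longleftrightarrow> (\<exists>w\<in>B. E w d)))"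
    if "v \<in> B" for v
  proof -
    have "{v} \<subseteq> N2" using that assms by blast
    then show ?thesis
      unfolding set_eq_iff N1_inter_nbhd_iff[OF assms] N1_inter_nbhd_iff[OF \<open>{v} \<subseteq> N2\<close>] by blast
  qed
  then show ?thesis
    unfolding Astar_def by blast
qed

end

locale two_root_neighbours = C67_free_rooted +
  fixes A :: "'a set" and a d1 d2 :: 'a
  assumes A_component: "A \<in> components E N2" and A_notin_Astar: "A \<notin> Astar V E x"
    and a_in_A: "a \<in> A" and d1_ne_d2: "d1 \<noteq> d2"
    and root_d1: "E x d1" and root_d2: "E x d2" and a_d1: "E a d1" and a_d2: "E a d2"
begin

lemma a_in_N2: "a \<in> N2"
  using A_component a_in_A components_subset by blast

lemma other_root_neighbour:
  obtains d' where "E x d'" "E a d'" "d' \<noteq> d" "d' = d1 \<or> d' = d2"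
  using d1_ne_d2 root_d1 root_d2 a_d1 a_d2 by metis

lemma A_star: "v \<in> A \<Longrightarrow> v = a \<or> E a v"
proof -
  assume "v \<in> A"
  then have "linked a v"
    using component_eq[OF symp_edge A_component a_in_A] by blast
  then show ?thesis
  proof (induction rule: rtranclp_induct)
    case (step u w)
    show ?case
    proof (rule ccontr)
      assume w: "\<not> (w = a \<or> E a w)"
      with step have "E a u" by auto
      obtain d where d: "E x d" "E w d" using N2_has_N1_neighbour step(2) by blast
      obtain d' where d': "E x d'" "E a d'" "d' \<noteq> d" by (rule other_root_neighbour)
      show False
        by (rule no_hexagon[of x d w u a d'])
          (use step(2) d d' w \<open>E a u\<close> a_in_N2 in \<open>simp_all add: edge_commute adj_ne N2_ne_N1\<close>)
    qed
  qed simp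
qed

lemma d1_neighbour_notin_A:
  assumes "s \<in> N2" "s \<noteq> a" "E s d1"
  shows "s \<notin> A"
proof
  assume "s \<in> A"
  with assms have "E a s" using A_star by blast
  have "A \<subseteq> N2" using A_component by (rule components_subset)
  obtain d3 b where d3: "E x d3" "\<not> E a d3" and b: "b \<in> A" "E b d3"
    using A_notin_Astar a_in_A A_component unfolding Astar_iff[OF \<open>A \<subseteq> N2\<close>] by blast
  have "E a b" using A_star b d3 by blast
  have "d3 \<noteq> d1" "d3 \<noteq> d2" using d3 a_d1 a_d2 by auto
  have "b \<in> N2" using b \<open>A \<subseteq> N2\<close> by blast
  show False
  proof (cases "b = s")
    case True
    show False
      by (rule no_hexagon[of x d3 s d1 a d2])
        (use assms d3 b True \<open>d3 \<noteq> d1\<close> \<open>d3 \<noteq> d2\<close> a_in_N2 d1_ne_d2 root_d1 root_d2 a_d1 a_d2 in \<open>simp_all add: edge_commute adj_ne N2_ne_N1\<close>)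
  next
    case False
    show False
      by (rule no_hexagon[of x d3 b a s d1])
        (use assms d3 b False \<open>d3 \<noteq> d1\<close> \<open>E a b\<close> \<open>E a s\<close> \<open>b \<in> N2\<close> root_d1 a_d1 a_in_N2 in \<open>simp_all add: edge_commute adj_ne N2_ne_N1\<close>)
  qed
qed

lemma linked_d1_neighbour_notin_A:
  assumes "s \<in> N2" "s \<noteq> a" "E s d1" "linked s v"
  shows "v \<notin> A"
proof
  assume "v \<in> A"
  then have "linked a v"
    using component_eq[OF symp_edge A_component a_in_A] by blast
  with assms(4) have "linked a s"
    by (blast intro: rtranclp_trans linked_sym)
  then have "s \<in> A"
    using component_eq[OF symp_edge A_component a_in_A] by blast
  with assms(1-3) show False
    using d1_neighbour_notin_A by blast
qed

lemma linked_d1_neighbour_root_neighbours: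
  assumes "s \<in> N2" "s \<noteq> a" "E s d1" "linked s v" "E x d" "E v d"
  shows "d = d1 \<or> d = d2"
  using assms(4-6)
proof (induction arbitrary: d rule: rtranclp_induct)
  case base
  show ?case
  proof (rule ccontr)
    assume "\<not> (d = d1 \<or> d = d2)"
    then show False
      by (intro no_hexagon[of x d s d1 a d2])
        (use assms(1-3) base d1_ne_d2 root_d1 root_d2 a_d1 a_d2 a_in_N2 in \<open>simp_all add: edge_commute adj_ne N2_ne_N1\<close>)
  qed
next
  case (step u w)
  have "linked s w" using step(1,2) by (rule rtranclp.rtrancl_into_rtrancl)
  then have "w \<noteq> a" "u \<noteq> a"
    using linked_d1_neighbour_notin_A[OF assms(1-3)] step(1) a_in_A by blast+
  obtain di where di: "E x di" "E u di" using N2_has_N1_neighbour step(2) by blast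
  with step.IH have "di = d1 \<or> di = d2" by blast
  then have "E a di" using a_d1 a_d2 by blast
  obtain d' where d': "E x d'" "E a d'" "d' \<noteq> di" "d' = d1 \<or> d' = d2"
    by (rule other_root_neighbour)
  show ?case
  proof (rule ccontr)
    assume "\<not> (d = d1 \<or> d = d2)"
    with d' \<open>di = d1 \<or> di = d2\<close> have "d \<noteq> di" "d \<noteq> d'" by auto
    then show False
      by (intro no_heptagon[of x d w u di a d'])
        (use step(2,4,5) di d'(1-3) \<open>E a di\<close> \<open>w \<noteq> a\<close> \<open>u \<noteq> a\<close> a_in_N2 in
          \<open>simp_all add: edge_commute adj_ne N2_ne_N1\<close>)
  qed
qed

lemma linked_d1_neighbour_not_both:
  assumes "s \<in> N2" "s \<noteq> a" "E s d1" "s \<notin> \<Union> (Astar V E x)" "linked s v"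
  shows "\<not> (E v d1 \<and> E v d2)"
proof
  assume v: "E v d1 \<and> E v d2"
  let ?B = "{w. linked s w}"
  have B: "?B \<in> components E N2" using component_of_mem assms(1) .
  have "?B \<subseteq> N2" using B by (rule components_subset)
  have "\<forall>d. E x d \<longrightarrow> (E v d \<longleftrightarrow> (\<exists>w\<in>?B. E w d))"
    using linked_d1_neighbour_root_neighbours[OF assms(1-3)] assms(5) v by blast
  with B assms(5) have "?B \<in> Astar V E x"
    unfolding Astar_iff[OF \<open>?B \<subseteq> N2\<close>] by blast
  with assms(4) show False by blast
qed

lemma linked_d1_neighbour_cases:
  assumes "s \<in> N2" "s \<noteq> a" "E s d1" "s \<notin> \<Union> (Astar V E x)" "linked s v"
  shows "E v d1 \<and> \<not> E v d2 \<or> E v d2 \<and> \<not> E v d1"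
proof -
  have "v \<in> N2" using induced_rtranclp_mem assms(5,1) .
  then obtain d where "E x d" "E v d" using N2_has_N1_neighbour by blast
  then show ?thesis
    using linked_d1_neighbour_root_neighbours[OF assms(1-3,5)]
      linked_d1_neighbour_not_both[OF assms] by blast
qed

text \<open>The first alternative carries a neighbour \<open>p\<close> of \<open>d\<^sub>1\<close> preceding \<open>v\<close> on the walk: a step from
  \<open>v\<close> to a vertex \<open>w\<close> that sees only \<open>d\<^sub>2\<close> would close the hexagon \<open>x d\<^sub>1 p v w d\<^sub>2\<close>.\<close>

lemma linked_d1_neighbour_walk:
  assumes "s \<in> N2" "s \<noteq> a" "E s d1" "s \<notin> \<Union> (Astar V E x)" "linked s v"
  shows "E v d1 \<and> (v = s \<or> (\<exists>p\<in>N2. E p v \<and> E p d1))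
    \<or> (\<exists>q\<in>N2. E s q \<and> E q d2 \<and> \<not> E q d1)"
  using assms(5)
proof (induction rule: rtranclp_induct)
  case (step u w)
  have "linked s w" using step(1,2) by (rule rtranclp.rtrancl_into_rtrancl)
  from linked_d1_neighbour_cases[OF assms(1-4) this] show ?case
  proof
    assume "E w d1 \<and> \<not> E w d2"
    with step show ?case by blast
  next
    assume w: "E w d2 \<and> \<not> E w d1"
    from step.IH consider "u = s" | p where "p \<in> N2" "E p u" "E p d1"
      | "\<exists>q\<in>N2. E s q \<and> E q d2 \<and> \<not> E q d1"
      by blast
    then show ?case
    proof cases
      case 1
      with step(2) w show ?thesis by blast
    next
      case (2 p)
      with w have "p \<noteq> w" by blast
      have False
        by (rule no_hexagon[of x d1 p u w d2])
          (use step(2) w 2 \<open>p \<noteq> w\<close> d1_ne_d2 root_d1 root_d2 in \<open>simp_all add: edge_commute adj_ne N2_ne_N1\<close>)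
      then show ?thesis by blast
    qed simp
  qed
qed (use assms(3) in simp)

lemma d1_neighbour_outside_Astar:
  assumes "s \<in> N2" "s \<noteq> a" "E s d1" "s \<notin> \<Union> (Astar V E x)"
  shows "\<not> E s d2" "\<exists>q\<in>N2. E s q \<and> E q d2 \<and> \<not> E q d1"
proof -
  show "\<not> E s d2"
    using linked_d1_neighbour_not_both[OF assms] assms(3) by blast
  let ?B = "{w. linked s w}"
  have B: "?B \<in> components E N2" using component_of_mem assms(1) .
  have "?B \<subseteq> N2" using B by (rule components_subset)
  have "?B \<notin> Astar V E x" using assms(4) by blast
  then obtain d w where "E x d" "\<not> E s d" "linked s w" "E w d"
    using B unfolding Astar_iff[OF \<open>?B \<subseteq> N2\<close>] by blast
  with assms(3) have "E w d2" "\<not> E w d1"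
    using linked_d1_neighbour_root_neighbours[OF assms(1-3)]
      linked_d1_neighbour_not_both[OF assms] by blast+
  then show "\<exists>q\<in>N2. E s q \<and> E q d2 \<and> \<not> E q d1"
    using linked_d1_neighbour_walk[OF assms \<open>linked s w\<close>] by blast
qed

end

theorem corollary2p12:
  fixes V :: "'a set" and E :: "'a \<Rightarrow> 'a \<Rightarrow> bool" and x a :: 'a and A S :: "'a set"
  assumes "simple_graph V E"
    and "\<not> has_cycle_subgraph V E 6" and "\<not> has_cycle_subgraph V E 7"
    and "x \<in> V"
    and "A \<in> components E (nbhd2 V E {x})" and "A \<notin> Astar V E x"
    and "a \<in> A"
    and "card (nbhd V E {a} \<inter> Dset V E x) = 2"
    and "S \<subseteq> nbhd2 V E {x} - \<Union> (Astar V E x)"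
    and "independent E S"
    and "Dset V E x \<subseteq> nbhd V E S"
  shows "a \<in> S"
proof (rule ccontr)
  assume "a \<notin> S"
  interpret C67_free_rooted V E x using assms(1-3) by unfold_locales
  obtain d1 d2 where d12: "nbhd V E {a} \<inter> Dset V E x = {d1, d2}" "d1 \<noteq> d2"
    using assms(8) by (auto simp: card_2_iff)
  then have "d1 \<in> Dset V E x" "d2 \<in> Dset V E x" "E a d1" "E a d2"
    by (auto simp: nbhd_def)
  then have "E x d1" "E x d2"
    unfolding Dset_def using mem_N1_iff by blast+
  interpret pair: two_root_neighbours V E x A a d1 d2
    by unfold_locales (use assms(5-7) d12(2) \<open>E x d1\<close> \<open>E x d2\<close> \<open>E a d1\<close> \<open>E a d2\<close> in auto)
  interpret pair': two_root_neighbours V E x A a d2 d1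
    by unfold_locales (use assms(5-7) d12(2) \<open>E x d1\<close> \<open>E x d2\<close> \<open>E a d1\<close> \<open>E a d2\<close> in auto)
  obtain s1 s2 where s: "s1 \<in> S" "E s1 d1" "s2 \<in> S" "E s2 d2"
    using assms(11) \<open>d1 \<in> Dset V E x\<close> \<open>d2 \<in> Dset V E x\<close> unfolding nbhd_def by blast
  with assms(9) \<open>a \<notin> S\<close> have "s1 \<in> N2" "s1 \<noteq> a" "s1 \<notin> \<Union> (Astar V E x)"
    "s2 \<in> N2" "s2 \<noteq> a" "s2 \<notin> \<Union> (Astar V E x)" by blast+
  then obtain q p where "\<not> E s1 d2" "q \<in> N2" "E s1 q" "E q d2" "\<not> E q d1"
    and "\<not> E s2 d1" "p \<in> N2" "E s2 p" "E p d1" "\<not> E p d2"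
    using pair.d1_neighbour_outside_Astar pair'.d1_neighbour_outside_Astar s by metis
  moreover have "q \<noteq> s2" "p \<noteq> s1"
    using assms(10) s \<open>E s1 q\<close> \<open>E s2 p\<close> unfolding independent_def by blast+
  moreover have "s1 \<noteq> s2" "q \<noteq> p"
    using s \<open>\<not> E s2 d1\<close> \<open>E q d2\<close> \<open>\<not> E p d2\<close> by blast+
  ultimately show False
    by (intro no_hexagon[of d1 s1 q d2 s2 p])
      (use s d12(2) \<open>s1 \<in> N2\<close> \<open>s2 \<in> N2\<close> \<open>E x d1\<close> \<open>E x d2\<close> in
        \<open>simp_all add: edge_commute adj_ne N2_ne_N1\<close>)
qed

end
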